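(* Let $(\mathcal{T}_\lambda)_{\lambda>0}$ be a family of bounded operators on $\mathcal{B}_1(\mathcal{H}_P)$ with $\sup_\lambda\|\mathcal{T}_\lambda\|<\infty$. If $\operatorname{pt-lim}_{\lambda\to0}\mathcal{T}_\lambda=0$, then $\mathcal{T}_\lambda\to0$ strongly, i.e. $\lim_{\lambda\to0}\|\mathcal{T}_\lambda(T)\|_1=0$ for every $T\in\mathcal{B}_1(\mathcal{H}_P)$.
   Context: $\mathcal{H}_P=\ell^2(\mathbb{Z}^d)\otimes\mathbb{C}^N$ with $\{|x\rangle\}$ the canonical basis of $\ell^2(\mathbb{Z}^d)$; $\mathcal{B}_1(\mathcal{H}_P)$ is the space of trace-class operators with trace norm $\|A\|_1=\mathrm{tr}|A|$, and $\|\mathcal{T}\|$ is the operator norm of $\mathcal{T}$ on $\mathcal{B}_1(\mathcal{H}_P)$. For an operator $A$ on $\mathcal{H}_P$, $\langle x|A|y\rangle$ denotes the $N\times N$ matrix block. For $\mathcal{T}$ on $\mathcal{B}_1(\mathcal{H}_P)$ and $x_0,y_0,x,y\in\mathbb{Z}^d$, the kernel $(\mathcal{T})_{x_0,y_0;x,y}$ is the linear map on $N\times N$ matrices $M\mapsto\langle x|\mathcal{T}(M\otimes|x_0\rangle\langle y_0|)|y\rangle$. One writes $\operatorname{pt-lim}_{\lambda\to0}\mathcal{T}_\lambda=0$ if $\lim_{\lambda\to0}\sum_{x,y\in\mathbb{Z}^d}\|(\mathcal{T}_\lambda)_{x_0,y_0;x,y}\|=0$ for all $x_0,y_0\in\mathbb{Z}^d$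 (matrix operator norm). *)

theory Defs
  imports "HOL-Analysis.Analysis"
begin

text \<open>The Hilbert space H_P = l^2(Z^d) (x) C^N is modelled as square-summable functions on
the index set (int^'d) \<times> 'n, where the finite type 'd gives the dimension d and the finite
type 'n gives the N internal degrees of freedom.  A (bounded) operator A on H_P is represented
by its matrix kernel K i j = <i|A|j>.\<close>

type_synonym ('d,'n) site = "(int ^ 'd) \<times> 'n"
type_synonym ('d,'n) kernel = "('d,'n) site \<Rightarrow> ('d,'n) site \<Rightarrow> complex"

definition is_l2 :: "('a \<Rightarrow> complex) \<Rightarrow> bool" where
  "is_l2 f \<longleftrightarrow> (\<lambda>i. (norm (f i))\<^sup>2) summable_on UNIV"

definition l2norm :: "('a \<Rightarrow> complex) \<Rightarrow> real" where
  "l2norm f = sqrt (\<Sum>\<^sub>\<infinity>i. (norm (f i))\<^sup>2)"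

definition nuclear_rep :: "('a \<Rightarrow> 'a \<Rightarrow> complex) \<Rightarrow> (nat \<Rightarrow> 'a \<Rightarrow> complex) \<Rightarrow> (nat \<Rightarrow> 'a \<Rightarrow> complex) \<Rightarrow> bool" where
  "nuclear_rep K u v \<longleftrightarrow>
     (\<forall>k. is_l2 (u k) \<and> is_l2 (v k)) \<and>
     summable (\<lambda>k. l2norm (u k) * l2norm (v k)) \<and>
     (\<forall>i j. (\<lambda>k. u k i * cnj (v k j)) sums K i j)"

definition trace_class :: "('a \<Rightarrow> 'a \<Rightarrow> complex) \<Rightarrow> bool" where
  "trace_class K \<longleftrightarrow> (\<exists>u v. nuclear_rep K u v)"

text \<open>Trace norm ||K||_1 (= tr|K|), as the nuclear norm.\<close>
definition trace_norm :: "('a \<Rightarrow> 'a \<Rightarrow> complex) \<Rightarrow> real" where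
  "trace_norm K = Inf {(\<Sum>k. l2norm (u k) * l2norm (v k)) | u v. nuclear_rep K u v}"

definition bounded_superop :: "(('a \<Rightarrow> 'a \<Rightarrow> complex) \<Rightarrow> ('a \<Rightarrow> 'a \<Rightarrow> complex)) \<Rightarrow> bool" where
  "bounded_superop T \<longleftrightarrow>
     (\<forall>A. trace_class A \<longrightarrow> trace_class (T A)) \<and>
     (\<forall>A B. trace_class A \<longrightarrow> trace_class B \<longrightarrow> T (\<lambda>i j. A i j + B i j) = (\<lambda>i j. T A i j + T B i j)) \<and>
     (\<forall>c A. trace_class A \<longrightarrow> T (\<lambda>i j. c * A i j) = (\<lambda>i j. c * T A i j)) \<and>
     (\<exists>C. \<forall>A. trace_class A \<longrightarrow> trace_norm (T A) \<le> C * trace_norm A)"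

definition superop_norm :: "(('a \<Rightarrow> 'a \<Rightarrow> complex) \<Rightarrow> ('a \<Rightarrow> 'a \<Rightarrow> complex)) \<Rightarrow> real" where
  "superop_norm T = (SUP A\<in>{A. trace_class A \<and> trace_norm A \<le> 1}. trace_norm (T A))"

definition vec_norm :: "('n::finite \<Rightarrow> complex) \<Rightarrow> real" where
  "vec_norm w = sqrt (\<Sum>a\<in>UNIV. (norm (w a))\<^sup>2)"

definition mat_opnorm :: "('n::finite \<Rightarrow> 'n \<Rightarrow> complex) \<Rightarrow> real" where
  "mat_opnorm M = (SUP w\<in>{w. vec_norm w \<le> 1}. vec_norm (\<lambda>a. \<Sum>b\<in>UNIV. M a b * w b))"

definition matmap_norm :: "(('n::finite \<Rightarrow> 'n \<Rightarrow> complex) \<Rightarrow> ('n \<Rightarrow> 'n \<Rightarrow> complex)) \<Rightarrow> real" where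
  "matmap_norm \<Phi> = (SUP M\<in>{M. mat_opnorm M \<le> 1}. mat_opnorm (\<Phi> M))"

text \<open>M \<otimes> |x0><y0| as a kernel.\<close>
definition elem_op :: "('n \<Rightarrow> 'n \<Rightarrow> complex) \<Rightarrow> int ^ 'd \<Rightarrow> int ^ 'd \<Rightarrow> ('d,'n) kernel" where
  "elem_op M x0 y0 = (\<lambda>(x,a) (y,b). if x = x0 \<and> y = y0 then M a b else 0)"

text \<open>The kernel (T)_{x0,y0;x,y} : M \<mapsto> <x| T(M \<otimes> |x0><y0|) |y>.\<close>
definition superop_kernel :: "(('d,'n) kernel \<Rightarrow> ('d,'n) kernel) \<Rightarrow> int ^ 'd \<Rightarrow> int ^ 'd \<Rightarrow> int ^ 'd \<Rightarrow> int ^ 'd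
     \<Rightarrow> ('n \<Rightarrow> 'n \<Rightarrow> complex) \<Rightarrow> ('n \<Rightarrow> 'n \<Rightarrow> complex)" where
  "superop_kernel T x0 y0 x y = (\<lambda>M a b. T (elem_op M x0 y0) (x,a) (y,b))"

text \<open>pt-lim_{\<lambda>\<rightarrow>0} T_\<lambda> = 0: for all x0,y0 the (eventually finite) sums
 \<Sum>_{x,y} \<parallel>(T_\<lambda>)_{x0,y0;x,y}\<parallel> tend to 0 as \<lambda> \<rightarrow> 0+.\<close>
definition pt_lim_zero :: "(real \<Rightarrow> ('d::finite,'n::finite) kernel \<Rightarrow> ('d,'n) kernel) \<Rightarrow> bool" where
  "pt_lim_zero T \<longleftrightarrow> (\<forall>x0 y0.
     (\<forall>\<^sub>F l in at_right 0. (\<lambda>(x,y). matmap_norm (superop_kernel (T l) x0 y0 x y)) summable_on UNIV) \<and>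
     ((\<lambda>l. \<Sum>\<^sub>\<infinity>(x,y)\<in>UNIV. matmap_norm (superop_kernel (T l) x0 y0 x y)) \<longlongrightarrow> 0) (at_right 0))"

end

theory Submission
  imports Defs
begin

text \<open>By the uniform bound on the norms of the T_l, the trace-class operators A with
\<parallel>T_l A\<parallel>_1 \<rightarrow> 0 form a subspace of B_1 that is closed in trace norm.
It contains the matrix units |x,a\<rangle>\<langle>y,b|: the trace norm of T_l applied to such a unit
is at most the sum of the moduli of its entries, and this sum is bounded by
N^2 \<Sum>_{x,y} \<parallel>(T_l)_{x0,y0;x,y}\<parallel>, which tends to 0. Truncating u and v to finite
sets approximates |u\<rangle>\<langle>v| in trace norm by finite combinations of matrix units, and the
partial sums of a nuclear representation approximate every trace-class operator.\<close>

section \<open>Square-summable vectors\<close>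

definition zero_outside :: "'a set \<Rightarrow> ('a \<Rightarrow> complex) \<Rightarrow> 'a \<Rightarrow> complex" where
  "zero_outside S u = (\<lambda>i. if i \<in> S then u i else 0)"

lemma l2norm_nonneg: "0 \<le> l2norm u"
  unfolding l2norm_def by (simp add: infsum_nonneg)

lemma is_l2_zero: "is_l2 (\<lambda>i. 0)" and l2norm_zero: "l2norm (\<lambda>i. 0) = 0"
  by (auto simp: is_l2_def l2norm_def)

lemma is_l2_delta: "is_l2 (\<lambda>i. if i = p then c else 0)"
  and l2norm_delta: "l2norm (\<lambda>i. if i = p then c else 0) = norm c"
proof -
  have "(\<lambda>i. (norm (if i = p then c else 0))\<^sup>2) summable_on {p}" by simp
  then show "is_l2 (\<lambda>i. if i = p then c else 0)" unfolding is_l2_def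
    by (subst summable_on_cong_neutral[of "{p}" UNIV]) auto
  have "(\<Sum>\<^sub>\<infinity>i. (norm (if i = p then c else 0))\<^sup>2) = (\<Sum>\<^sub>\<infinity>i\<in>{p}. (norm (if i = p then c else 0))\<^sup>2)"
    by (rule infsum_cong_neutral) auto
  then show "l2norm (\<lambda>i. if i = p then c else 0) = norm c" unfolding l2norm_def by simp
qed

lemma is_l2_scale: "is_l2 u \<Longrightarrow> is_l2 (\<lambda>i. c * u i)"
  and l2norm_scale: "is_l2 u \<Longrightarrow> l2norm (\<lambda>i. c * u i) = norm c * l2norm u"
proof -
  have eq: "(\<lambda>i. (norm (c * u i))\<^sup>2) = (\<lambda>i. (norm c)\<^sup>2 * (norm (u i))\<^sup>2)"
    by (simp add: norm_mult power_mult_distrib)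
  show "is_l2 u \<Longrightarrow> is_l2 (\<lambda>i. c * u i)" unfolding is_l2_def eq
    by (rule summable_on_cmult_right)
  show "is_l2 u \<Longrightarrow> l2norm (\<lambda>i. c * u i) = norm c * l2norm u" unfolding l2norm_def is_l2_def eq
    by (simp add: infsum_cmult_right real_sqrt_mult)
qed

lemma norm_le_l2norm:
  assumes "is_l2 u" shows "norm (u i) \<le> l2norm u"
proof -
  have "sum (\<lambda>i. (norm (u i))\<^sup>2) {i} \<le> (\<Sum>\<^sub>\<infinity>i. (norm (u i))\<^sup>2)"
    using assms unfolding is_l2_def by (intro finite_sum_le_infsum) auto
  then show ?thesis unfolding l2norm_def by (simp add: real_le_rsqrt)
qed

lemma l2norm_zero_outside: "l2norm (zero_outside S u) = sqrt (\<Sum>\<^sub>\<infinity>i\<in>S. (norm (u i))\<^sup>2)"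
  unfolding l2norm_def by (subst infsum_cong_neutral[of S UNIV]) (auto simp: zero_outside_def)

lemma is_l2_zero_outside:
  assumes "is_l2 u" shows "is_l2 (zero_outside S u)"
proof -
  have "(\<lambda>i. (norm (u i))\<^sup>2) summable_on S"
    using assms unfolding is_l2_def by (rule summable_on_subset_banach) simp
  then show ?thesis unfolding is_l2_def
    by (subst summable_on_cong_neutral[of S UNIV]) (auto simp: zero_outside_def)
qed

lemma l2norm_zero_outside_le:
  assumes "is_l2 u" shows "l2norm (zero_outside S u) \<le> l2norm u"
proof -
  have "(\<Sum>\<^sub>\<infinity>i\<in>S. (norm (u i))\<^sup>2) \<le> (\<Sum>\<^sub>\<infinity>i. (norm (u i))\<^sup>2)"
    using assms unfolding is_l2_def
    by (intro infsum_mono_neutral) (auto intro: summable_on_subset_banach)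
  then have "sqrt (\<Sum>\<^sub>\<infinity>i\<in>S. (norm (u i))\<^sup>2) \<le> l2norm u"
    unfolding l2norm_def by simp
  then show ?thesis by (simp only: l2norm_zero_outside)
qed

lemma l2norm_tail_small:
  assumes u: "is_l2 u" and e: "e > 0"
  obtains F where "finite F" "\<And>G. F \<subseteq> G \<Longrightarrow> l2norm (zero_outside (- G) u) \<le> e"
proof -
  let ?f = "\<lambda>i. (norm (u i))\<^sup>2"
  obtain F where F: "finite F" "dist (sum ?f F) (\<Sum>\<^sub>\<infinity>i. ?f i) \<le> e\<^sup>2"
    using infsum_finite_approximation[of ?f UNIV "e\<^sup>2"] u e unfolding is_l2_def by auto
  have "(\<Sum>\<^sub>\<infinity>i\<in>UNIV - F. ?f i) = (\<Sum>\<^sub>\<infinity>i. ?f i) - (\<Sum>\<^sub>\<infinity>i\<in>F. ?f i)"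
    using u F(1) unfolding is_l2_def by (intro infsum_Diff) auto
  then have tail: "(\<Sum>\<^sub>\<infinity>i\<in>- F. ?f i) \<le> e\<^sup>2"
    using F by (simp add: dist_real_def Compl_eq_Diff_UNIV)
  show ?thesis
  proof (rule that[OF F(1)])
    fix G assume "F \<subseteq> G"
    then have "(\<Sum>\<^sub>\<infinity>i\<in>- G. ?f i) \<le> (\<Sum>\<^sub>\<infinity>i\<in>- F. ?f i)"
      using u unfolding is_l2_def
      by (intro infsum_mono_neutral) (auto intro: summable_on_subset_banach)
    with tail have "(\<Sum>\<^sub>\<infinity>i\<in>- G. ?f i) \<le> e\<^sup>2" by linarith
    then show "l2norm (zero_outside (- G) u) \<le> e"
      using e by (simp add: l2norm_zero_outside real_le_lsqrt)
  qed
qed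

section \<open>Nuclear representations and the trace norm\<close>

definition rank_one :: "('a \<Rightarrow> complex) \<Rightarrow> ('a \<Rightarrow> complex) \<Rightarrow> 'a \<Rightarrow> 'a \<Rightarrow> complex" where
  "rank_one u v = (\<lambda>i j. u i * cnj (v j))"

definition nuclear_sum :: "(nat \<Rightarrow> 'a \<Rightarrow> complex) \<Rightarrow> (nat \<Rightarrow> 'a \<Rightarrow> complex) \<Rightarrow> real" where
  "nuclear_sum u v = (\<Sum>k. l2norm (u k) * l2norm (v k))"

definition interleave :: "(nat \<Rightarrow> 'b) \<Rightarrow> (nat \<Rightarrow> 'b) \<Rightarrow> nat \<Rightarrow> 'b" where
  "interleave f g n = (if even n then f (n div 2) else g (n div 2))"

lemma sums_interleave:
  fixes f g :: "nat \<Rightarrow> 'b::real_normed_vector"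
  assumes "f sums a" "g sums b" shows "interleave f g sums (a + b)"
proof -
  define F where "F n = (if even n then f (n div 2) else 0)" for n
  define G where "G n = (if odd n then g (n div 2) else 0)" for n
  have "(\<lambda>k. F (2*k)) sums a" using assms(1) by (simp add: F_def)
  moreover have "F n = 0" if "n \<notin> range (\<lambda>k. 2*k)" for n
    using that by (auto simp: F_def elim: evenE)
  ultimately have "F sums a"
    using sums_mono_reindex[of "\<lambda>k::nat. 2*k"] by (auto simp: strict_mono_def)
  moreover have "(\<lambda>k. G (2*k+1)) sums b" using assms(2) by (simp add: G_def)
  moreover have "G n = 0" if "n \<notin> range (\<lambda>k. 2*k+1)" for n
    using that by (auto simp: G_def elim: oddE)
  ultimately have "(\<lambda>n. F n + G n) sums (a + b)"
    using sums_mono_reindex[of "\<lambda>k::nat. 2*k+1"] by (auto simp: strict_mono_def intro: sums_add)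
  moreover have "(\<lambda>n. F n + G n) = interleave f g"
    by (auto simp: F_def G_def interleave_def)
  ultimately show ?thesis by simp
qed

lemma trace_norm_nuclear_sum: "trace_norm K = Inf {nuclear_sum u v | u v. nuclear_rep K u v}"
  by (simp add: trace_norm_def nuclear_sum_def)

lemma nuclear_sum_nonneg: "nuclear_rep K u v \<Longrightarrow> 0 \<le> nuclear_sum u v"
  unfolding nuclear_rep_def nuclear_sum_def by (intro suminf_nonneg) (auto simp: l2norm_nonneg)

lemma trace_norm_le_nuclear_sum:
  assumes "nuclear_rep K u v" shows "trace_norm K \<le> nuclear_sum u v"
  unfolding trace_norm_nuclear_sum
  by (rule cInf_lower) (use assms nuclear_sum_nonneg in \<open>auto intro!: bdd_belowI[of _ 0]\<close>)

lemma trace_norm_greatest: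
  assumes "trace_class K" "0 \<le> c"
    and le: "\<And>u v. nuclear_rep K u v \<Longrightarrow> X \<le> c * nuclear_sum u v"
  shows "X \<le> c * trace_norm K"
proof -
  obtain u v where uv: "nuclear_rep K u v" using assms(1) unfolding trace_class_def by blast
  show ?thesis
  proof (cases "c = 0")
    case True
    then show ?thesis using le[OF uv] by simp
  next
    case False
    with assms(2) have c: "c > 0" by simp
    have "X / c \<le> trace_norm K" unfolding trace_norm_nuclear_sum
      using uv le c by (intro cInf_greatest) (auto simp: pos_divide_le_eq mult.commute)
    then show ?thesis using c by (simp add: pos_divide_le_eq mult.commute)
  qed
qed

lemma trace_norm_nonneg: "trace_class K \<Longrightarrow> 0 \<le> trace_norm K"
  by (rule trace_norm_greatest[of K 1 0, simplified]) (auto intro: nuclear_sum_nonneg)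

lemma trace_class_rank_one:
  assumes u: "is_l2 u" and v: "is_l2 v"
  shows "trace_class (rank_one u v)" and "trace_norm (rank_one u v) \<le> l2norm u * l2norm v"
proof -
  define u' where "u' k = (if k = 0 then u else (\<lambda>_. 0))" for k :: nat
  define v' where "v' k = (if k = 0 then v else (\<lambda>_. 0))" for k :: nat
  have terms: "(\<lambda>k. l2norm (u' k) * l2norm (v' k)) = (\<lambda>k. if k = 0 then l2norm u * l2norm v else 0)"
    by (auto simp: u'_def v'_def l2norm_zero)
  have "(\<lambda>k. l2norm (u' k) * l2norm (v' k)) sums (l2norm u * l2norm v)"
    unfolding terms by (rule sums_single)
  moreover have "(\<lambda>k. u' k i * cnj (v' k j)) = (\<lambda>k. if k = 0 then rank_one u v i j else 0)" for i j
    by (auto simp: u'_def v'_def rank_one_def)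
  then have "(\<lambda>k. u' k i * cnj (v' k j)) sums rank_one u v i j" for i j
    using sums_single[of 0 "\<lambda>_. rank_one u v i j"] by simp
  ultimately have rep: "nuclear_rep (rank_one u v) u' v'" and "nuclear_sum u' v' = l2norm u * l2norm v"
    using u v by (auto simp: nuclear_rep_def nuclear_sum_def u'_def v'_def is_l2_zero sums_iff)
  then show "trace_class (rank_one u v)" "trace_norm (rank_one u v) \<le> l2norm u * l2norm v"
    using trace_norm_le_nuclear_sum[OF rep] unfolding trace_class_def by auto
qed

lemma nuclear_rep_add:
  assumes A: "nuclear_rep A u v" and B: "nuclear_rep B u' v'"
  shows "nuclear_rep (\<lambda>i j. A i j + B i j) (interleave u u') (interleave v v')"
    and "nuclear_sum (interleave u u') (interleave v v') = nuclear_sum u v + nuclear_sum u' v'"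
proof -
  have "(\<lambda>k. l2norm (interleave u u' k) * l2norm (interleave v v' k)) =
        interleave (\<lambda>k. l2norm (u k) * l2norm (v k)) (\<lambda>k. l2norm (u' k) * l2norm (v' k))"
    by (auto simp: interleave_def)
  then have s: "(\<lambda>k. l2norm (interleave u u' k) * l2norm (interleave v v' k)) sums
      (nuclear_sum u v + nuclear_sum u' v')"
    using A B unfolding nuclear_rep_def nuclear_sum_def by (auto intro!: sums_interleave simp: summable_sums)
  then show "nuclear_sum (interleave u u') (interleave v v') = nuclear_sum u v + nuclear_sum u' v'"
    by (simp add: nuclear_sum_def sums_iff)
  have "(\<lambda>k. interleave u u' k i * cnj (interleave v v' k j)) =
        interleave (\<lambda>k. u k i * cnj (v k j)) (\<lambda>k. u' k i * cnj (v' k j))" for i j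
    by (auto simp: interleave_def)
  with s A B show "nuclear_rep (\<lambda>i j. A i j + B i j) (interleave u u') (interleave v v')"
    unfolding nuclear_rep_def by (auto intro: sums_interleave sums_summable simp: interleave_def)
qed

lemma trace_class_add:
  assumes A: "trace_class A" and B: "trace_class B"
  shows "trace_class (\<lambda>i j. A i j + B i j)"
    and "trace_norm (\<lambda>i j. A i j + B i j) \<le> trace_norm A + trace_norm B"
proof -
  show "trace_class (\<lambda>i j. A i j + B i j)"
    using assms nuclear_rep_add(1) unfolding trace_class_def by blast
  have "trace_norm (\<lambda>i j. A i j + B i j) - nuclear_sum u' v' \<le> 1 * trace_norm A"
    if "nuclear_rep B u' v'" for u' v'
    using that trace_norm_le_nuclear_sum[OF nuclear_rep_add(1)] nuclear_rep_add(2)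
    by (intro trace_norm_greatest[OF A]) fastforce+
  then have "trace_norm (\<lambda>i j. A i j + B i j) - trace_norm A \<le> 1 * trace_norm B"
    by (intro trace_norm_greatest[OF B]) (auto simp: algebra_simps)
  then show "trace_norm (\<lambda>i j. A i j + B i j) \<le> trace_norm A + trace_norm B" by simp
qed

lemma nuclear_rep_scale:
  assumes A: "nuclear_rep A u v"
  shows "nuclear_rep (\<lambda>i j. c * A i j) (\<lambda>k i. c * u k i) v"
    and "nuclear_sum (\<lambda>k i. c * u k i) v = norm c * nuclear_sum u v"
proof -
  have "(\<lambda>k. l2norm (\<lambda>i. c * u k i) * l2norm (v k)) = (\<lambda>k. norm c * (l2norm (u k) * l2norm (v k)))"
    using A unfolding nuclear_rep_def by (auto simp: l2norm_scale)
  then have s: "(\<lambda>k. l2norm (\<lambda>i. c * u k i) * l2norm (v k)) sums (norm c * nuclear_sum u v)"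
    using A unfolding nuclear_rep_def nuclear_sum_def by (auto intro!: sums_mult simp: summable_sums)
  then show "nuclear_sum (\<lambda>k i. c * u k i) v = norm c * nuclear_sum u v"
    by (simp add: nuclear_sum_def sums_iff)
  have "(\<lambda>k. c * (u k i * cnj (v k j))) sums (c * A i j)" for i j
    using A unfolding nuclear_rep_def by (intro sums_mult) auto
  with s A show "nuclear_rep (\<lambda>i j. c * A i j) (\<lambda>k i. c * u k i) v"
    unfolding nuclear_rep_def by (auto intro: sums_summable is_l2_scale simp: mult.assoc)
qed

lemma trace_class_scale:
  assumes A: "trace_class A"
  shows "trace_class (\<lambda>i j. c * A i j)" and "trace_norm (\<lambda>i j. c * A i j) \<le> norm c * trace_norm A"
proof -
  show "trace_class (\<lambda>i j. c * A i j)" using A nuclear_rep_scale(1) unfolding trace_class_def by blast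
  show "trace_norm (\<lambda>i j. c * A i j) \<le> norm c * trace_norm A"
    using trace_norm_le_nuclear_sum[OF nuclear_rep_scale(1)] nuclear_rep_scale(2)
    by (intro trace_norm_greatest[OF A]) fastforce+
qed

lemma trace_class_zero: "trace_class (\<lambda>(i::'a) (j::'a). 0)"
  and trace_norm_zero: "trace_norm (\<lambda>(i::'a) (j::'a). 0) = 0"
proof -
  have rep: "nuclear_rep (\<lambda>(i::'a) (j::'a). 0) (\<lambda>k i. 0) (\<lambda>k j. 0)"
    by (simp add: nuclear_rep_def is_l2_zero l2norm_zero)
  then show tc: "trace_class (\<lambda>(i::'a) (j::'a). 0)" unfolding trace_class_def by blast
  show "trace_norm (\<lambda>(i::'a) (j::'a). 0) = 0"
    using trace_norm_le_nuclear_sum[OF rep] trace_norm_nonneg[OF tc]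
    by (simp add: nuclear_sum_def l2norm_zero)
qed

lemma trace_class_diff:
  assumes "trace_class A" "trace_class B" shows "trace_class (\<lambda>i j. A i j - B i j)"
  using trace_class_add(1)[OF assms(1) trace_class_scale(1)[OF assms(2), of "-1"]] by simp

lemma norm_le_trace_norm:
  assumes "trace_class K" shows "norm (K i j) \<le> trace_norm K"
proof -
  have "norm (K i j) \<le> 1 * nuclear_sum u v" if rep: "nuclear_rep K u v" for u v
  proof -
    have s: "(\<lambda>k. u k i * cnj (v k j)) sums K i j" and sm: "summable (\<lambda>k. l2norm (u k) * l2norm (v k))"
      and l2: "\<And>k. is_l2 (u k) \<and> is_l2 (v k)"
      using rep unfolding nuclear_rep_def by auto
    have b: "norm (u k i * cnj (v k j)) \<le> l2norm (u k) * l2norm (v k)" for k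
      using l2 by (auto simp: norm_mult intro!: mult_mono norm_le_l2norm l2norm_nonneg)
    have sn: "summable (\<lambda>k. norm (u k i * cnj (v k j)))"
      using b by (intro summable_comparison_test[OF _ sm]) auto
    have "norm (K i j) = norm (\<Sum>k. u k i * cnj (v k j))" using s by (simp add: sums_iff)
    also have "\<dots> \<le> (\<Sum>k. norm (u k i * cnj (v k j)))" by (rule summable_norm[OF sn])
    also have "\<dots> \<le> nuclear_sum u v" unfolding nuclear_sum_def by (rule suminf_le[OF b sn sm])
    finally show ?thesis by simp
  qed
  then show ?thesis using trace_norm_greatest[OF assms, of 1] by simp
qed

lemma trace_norm_nuclear_remainder_le:
  assumes rep: "nuclear_rep K u v"
  shows "trace_norm (\<lambda>i j. K i j - (\<Sum>k<n. rank_one (u k) (v k) i j))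
         \<le> nuclear_sum u v - (\<Sum>k<n. l2norm (u k) * l2norm (v k))"
proof -
  have s: "(\<lambda>k. l2norm (u (k+n)) * l2norm (v (k+n))) sums (nuclear_sum u v - (\<Sum>k<n. l2norm (u k) * l2norm (v k)))"
    using rep unfolding nuclear_rep_def nuclear_sum_def
    by (intro sums_split_initial_segment) (auto simp: summable_sums)
  have "nuclear_rep (\<lambda>i j. K i j - (\<Sum>k<n. rank_one (u k) (v k) i j)) (\<lambda>k. u (k + n)) (\<lambda>k. v (k + n))"
    using rep s unfolding nuclear_rep_def rank_one_def
    by (auto intro: sums_summable sums_split_initial_segment)
  from trace_norm_le_nuclear_sum[OF this] s show ?thesis
    by (simp add: nuclear_sum_def sums_iff)
qed

lemma trace_class_entrywise:
  fixes K :: "'a::countable \<Rightarrow> 'a \<Rightarrow> complex"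
  assumes sm: "(\<lambda>(i,j). norm (K i j)) summable_on UNIV"
  shows "trace_class K" and "trace_norm K \<le> (\<Sum>\<^sub>\<infinity>(i,j). norm (K i j))"
proof -
  txt \<open>One rank-one term |e_i\<rangle> K i j \<langle>e_j| per entry, entries enumerated by to_nat.\<close>
  define f where "f = (\<lambda>(i,j). norm (K i j))"
  define R where "R = range (to_nat :: 'a \<times> 'a \<Rightarrow> nat)"
  define p where "p n = (from_nat n :: 'a \<times> 'a)" for n
  define u where "u n = (if n \<in> R then (\<lambda>i. if i = fst (p n) then K (fst (p n)) (snd (p n)) else 0) else (\<lambda>_. 0))" for n
  define v where "v n = (if n \<in> R then (\<lambda>j. if j = snd (p n) then (1::complex) else 0) else (\<lambda>_. 0))" for n
  define h where "h n = (if n \<in> R then f (p n) else 0)" for n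
  have l2: "is_l2 (u n) \<and> is_l2 (v n)" for n
    unfolding u_def v_def by (auto simp: is_l2_delta is_l2_zero)
  have hn: "l2norm (u n) * l2norm (v n) = h n" for n
    unfolding u_def v_def h_def f_def by (auto simp: l2norm_delta l2norm_zero case_prod_beta)
  have terms_eq: "u n i * cnj (v n j) = (if n = to_nat (i,j) then K i j else 0)" for n i j
  proof (cases "n \<in> R")
    case True
    then obtain q :: "'a \<times> 'a" where q: "n = to_nat q" unfolding R_def by blast
    then have "(i = fst q \<and> j = snd q) \<longleftrightarrow> n = to_nat (i,j)" by (cases q) auto
    then show ?thesis using True unfolding u_def v_def p_def q by auto
  next
    case False
    then show ?thesis unfolding u_def v_def R_def by auto
  qed
  have hto: "h \<circ> to_nat = f" by (auto simp: h_def p_def R_def)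
  have "(h has_sum infsum f UNIV) R"
    unfolding R_def using has_sum_infsum[OF sm]
    by (subst has_sum_reindex) (auto simp: inj_on_def hto f_def)
  then have "(h has_sum infsum f UNIV) UNIV"
    by (subst (asm) has_sum_cong_neutral[of UNIV _ h]) (auto simp: h_def R_def)
  then have hs: "h sums infsum f UNIV" by (rule has_sum_imp_sums)
  have rep: "nuclear_rep K u v" unfolding nuclear_rep_def
    using l2 hs sums_single[of "to_nat (i,j)" "\<lambda>_. K i j" for i j]
    by (auto simp: hn terms_eq sums_summable)
  then show "trace_class K" unfolding trace_class_def by blast
  have "nuclear_sum u v = infsum f UNIV" unfolding nuclear_sum_def hn using hs by (simp add: sums_iff)
  with trace_norm_le_nuclear_sum[OF rep] show "trace_norm K \<le> (\<Sum>\<^sub>\<infinity>(i,j). norm (K i j))"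
    by (simp add: f_def)
qed

lemma trace_class_finite_support:
  fixes K :: "'a::countable \<Rightarrow> 'a \<Rightarrow> complex"
  assumes F: "finite F" and supp: "\<And>i j. (i, j) \<notin> F \<Longrightarrow> K i j = 0"
  shows "trace_class K" and "trace_norm K \<le> (\<Sum>(i,j)\<in>F. norm (K i j))"
proof -
  let ?f = "\<lambda>(i,j). norm (K i j)"
  have sm: "?f summable_on UNIV"
    using F by (subst summable_on_cong_neutral[of F UNIV ?f ?f]) (auto simp: supp)
  have "(\<Sum>\<^sub>\<infinity>p. ?f p) = (\<Sum>\<^sub>\<infinity>p\<in>F. ?f p)"
    by (rule infsum_cong_neutral) (auto simp: supp)
  then show "trace_class K" "trace_norm K \<le> (\<Sum>(i,j)\<in>F. norm (K i j))"
    using trace_class_entrywise[OF sm] F by auto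
qed

lemma elem_op_apply: "elem_op M x0 y0 (x,a) (y,b) = (if x = x0 \<and> y = y0 then M a b else 0)"
  by (simp add: elem_op_def)

lemma trace_class_elem_op:
  fixes M :: "'n::finite \<Rightarrow> 'n \<Rightarrow> complex" and x0 y0 :: "int ^ 'd::finite"
  shows "trace_class (elem_op M x0 y0)"
    and "trace_norm (elem_op M x0 y0) \<le> (\<Sum>a\<in>UNIV. \<Sum>b\<in>UNIV. norm (M a b))"
proof -
  define \<iota> where "\<iota> = (\<lambda>(a,b). (((x0, a), (y0, b)) :: ('d,'n) site \<times> ('d,'n) site))"
  have supp: "elem_op M x0 y0 i j = 0" if "(i, j) \<notin> range \<iota>" for i j
    using that by (cases i, cases j) (auto simp: \<iota>_def elem_op_apply)
  have "(\<Sum>(i,j)\<in>range \<iota>. norm (elem_op M x0 y0 i j)) = (\<Sum>(a,b)\<in>UNIV. norm (M a b))"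
    by (subst sum.reindex) (auto simp: inj_on_def \<iota>_def elem_op_apply case_prod_beta)
  also have "\<dots> = (\<Sum>a\<in>UNIV. \<Sum>b\<in>UNIV. norm (M a b))"
    by (simp add: sum.cartesian_product flip: UNIV_Times_UNIV)
  finally show "trace_class (elem_op M x0 y0)"
    and "trace_norm (elem_op M x0 y0) \<le> (\<Sum>a\<in>UNIV. \<Sum>b\<in>UNIV. norm (M a b))"
    using trace_class_finite_support[of "range \<iota>" "elem_op M x0 y0", OF _ supp] by auto
qed

lemma bounded_superop_trace_class: "bounded_superop T \<Longrightarrow> trace_class A \<Longrightarrow> trace_class (T A)"
  unfolding bounded_superop_def by blast

lemma bounded_superop_add:
  "bounded_superop T \<Longrightarrow> trace_class A \<Longrightarrow> trace_class B \<Longrightarrow>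
    T (\<lambda>i j. A i j + B i j) = (\<lambda>i j. T A i j + T B i j)"
  unfolding bounded_superop_def by blast

lemma bounded_superop_scale:
  "bounded_superop T \<Longrightarrow> trace_class A \<Longrightarrow> T (\<lambda>i j. c * A i j) = (\<lambda>i j. c * T A i j)"
  unfolding bounded_superop_def by blast

lemma bounded_superop_zero:
  assumes "bounded_superop T" shows "T (\<lambda>i j. 0) = (\<lambda>i j. 0)"
  using bounded_superop_scale[OF assms trace_class_zero, of 0] by simp

lemma trace_norm_superop_le:
  assumes T: "bounded_superop T" and A: "trace_class A"
  shows "trace_norm (T A) \<le> superop_norm T * trace_norm A"
proof -
  obtain C where C: "\<And>A. trace_class A \<Longrightarrow> trace_norm (T A) \<le> C * trace_norm A"
    using T unfolding bounded_superop_def by blast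
  have "trace_norm (T B) \<le> max C 0" if "trace_class B" "trace_norm B \<le> 1" for B
  proof -
    have "C * trace_norm B \<le> max C 0 * 1"
      using trace_norm_nonneg[OF that(1)] that(2) by (intro mult_mono) auto
    then show ?thesis using C[OF that(1)] by simp
  qed
  then have "bdd_above ((\<lambda>B. trace_norm (T B)) ` {B. trace_class B \<and> trace_norm B \<le> 1})"
    by (intro bdd_aboveI2[where M = "max C 0"]) auto
  then have le_norm: "trace_norm (T B) \<le> superop_norm T" if "trace_class B" "trace_norm B \<le> 1" for B
    unfolding superop_norm_def using that by (intro cSUP_upper) auto
  show ?thesis
  proof (cases "trace_norm A = 0")
    case True
    then have "A = (\<lambda>i j. 0)" using norm_le_trace_norm[OF A] by (auto simp: fun_eq_iff)
    then show ?thesis using bounded_superop_zero[OF T] by (simp add: trace_norm_zero)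
  next
    case False
    define t where "t = trace_norm A"
    with False trace_norm_nonneg[OF A] have t: "t > 0" by simp
    define B where "B = (\<lambda>i j. complex_of_real (1 / t) * A i j)"
    have B: "trace_class B" unfolding B_def by (rule trace_class_scale(1)[OF A])
    have "trace_norm B \<le> norm (complex_of_real (1 / t)) * t"
      unfolding B_def t_def by (rule trace_class_scale(2)[OF A])
    with t have B1: "trace_norm B \<le> 1" by (simp add: norm_divide)
    have "A = (\<lambda>i j. complex_of_real t * B i j)" using t by (auto simp: B_def)
    then have "T A = (\<lambda>i j. complex_of_real t * T B i j)" using bounded_superop_scale[OF T B] by simp
    then have "trace_norm (T A) \<le> t * trace_norm (T B)"
      using trace_class_scale(2)[OF bounded_superop_trace_class[OF T B], of t] t by simp
    also have "\<dots> \<le> t * superop_norm T" using le_norm[OF B B1] t by simp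
    finally show ?thesis by (simp add: t_def mult.commute)
  qed
qed

definition mat_unit :: "'n \<Rightarrow> 'n \<Rightarrow> 'n \<Rightarrow> 'n \<Rightarrow> complex" where
  "mat_unit a b = (\<lambda>a' b'. if a' = a \<and> b' = b then 1 else 0)"

definition unit_kernel :: "'a \<Rightarrow> 'a \<Rightarrow> 'a \<Rightarrow> 'a \<Rightarrow> complex" where
  "unit_kernel p q = (\<lambda>i j. if i = p \<and> j = q then 1 else 0)"

lemma elem_op_mat_unit: "elem_op (mat_unit a b) x0 y0 = unit_kernel (x0, a) (y0, b)"
  by (auto simp: fun_eq_iff elem_op_def mat_unit_def unit_kernel_def)

lemma vec_norm_eq_L2_set: "vec_norm w = L2_set (\<lambda>a. norm (w a)) UNIV"
  by (simp add: vec_norm_def L2_set_def)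

lemma norm_le_vec_norm: "norm (w a) \<le> vec_norm w"
  unfolding vec_norm_eq_L2_set by (rule member_le_L2_set) auto

lemma vec_norm_le_sum_norm: "vec_norm w \<le> (\<Sum>a\<in>UNIV. norm (w a))"
  unfolding vec_norm_eq_L2_set by (rule L2_set_le_sum) auto

lemma vec_norm_delta: "vec_norm (\<lambda>a'::'n::finite. if a' = a then c else 0) = norm c"
proof -
  have "(\<Sum>a'\<in>UNIV. (norm (if a' = a then c else 0))\<^sup>2) = (\<Sum>a'\<in>UNIV. if a' = a then (norm c)\<^sup>2 else 0)"
    by (rule sum.cong) auto
  then show ?thesis by (simp add: vec_norm_def)
qed

lemma vec_norm_mat_apply_le:
  fixes M :: "'m::finite \<Rightarrow> 'n::finite \<Rightarrow> complex"
  assumes w: "vec_norm w \<le> 1"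
  shows "vec_norm (\<lambda>a. \<Sum>b\<in>UNIV. M a b * w b) \<le> (\<Sum>a\<in>UNIV. \<Sum>b\<in>UNIV. norm (M a b))"
proof -
  have "vec_norm (\<lambda>a. \<Sum>b\<in>UNIV. M a b * w b) \<le> (\<Sum>a\<in>UNIV. norm (\<Sum>b\<in>UNIV. M a b * w b))"
    by (rule vec_norm_le_sum_norm)
  also have "\<dots> \<le> (\<Sum>a\<in>UNIV. \<Sum>b\<in>UNIV. norm (M a b * w b))"
    by (intro sum_mono norm_sum)
  also have "\<dots> \<le> (\<Sum>a\<in>UNIV. \<Sum>b\<in>UNIV. norm (M a b))"
  proof (intro sum_mono)
    fix a b
    have "norm (w b) \<le> 1" using norm_le_vec_norm[of w b] w by linarith
    then show "norm (M a b * w b) \<le> norm (M a b)" by (simp add: norm_mult mult_left_le)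
  qed
  finally show ?thesis .
qed

lemma bdd_above_mat_apply:
  "bdd_above ((\<lambda>w. vec_norm (\<lambda>a. \<Sum>b\<in>UNIV. M a b * w b)) ` {w. vec_norm w \<le> 1})"
  by (rule bdd_aboveI2[where M = "\<Sum>a\<in>UNIV. \<Sum>b\<in>UNIV. norm (M a b)"]) (auto intro: vec_norm_mat_apply_le)

lemma mat_opnorm_le_sum_norm:
  "mat_opnorm (M::'n::finite \<Rightarrow> 'n \<Rightarrow> complex) \<le> (\<Sum>a\<in>UNIV. \<Sum>b\<in>UNIV. norm (M a b))"
  unfolding mat_opnorm_def
proof (rule cSUP_least)
  have "vec_norm (\<lambda>_::'n. 0) \<le> 1" by (simp add: vec_norm_def)
  then show "{w. vec_norm (w::'n \<Rightarrow> complex) \<le> 1} \<noteq> {}" by blast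
qed (auto intro: vec_norm_mat_apply_le)

lemma norm_le_mat_opnorm: "norm (M a b) \<le> mat_opnorm (M::'n::finite \<Rightarrow> 'n \<Rightarrow> complex)"
proof -
  define w where "w = (\<lambda>b'::'n. if b' = b then (1::complex) else 0)"
  have "(\<lambda>a. \<Sum>b'\<in>UNIV. M a b' * w b') = (\<lambda>a. M a b)"
    by (simp add: w_def if_distrib cong: if_cong)
  moreover have "vec_norm w \<le> 1" unfolding w_def vec_norm_delta by simp
  then have "vec_norm (\<lambda>a. \<Sum>b'\<in>UNIV. M a b' * w b') \<le> mat_opnorm M"
    unfolding mat_opnorm_def by (intro cSUP_upper[OF _ bdd_above_mat_apply]) auto
  ultimately show ?thesis using norm_le_vec_norm[of "\<lambda>a. M a b" a] by simp
qed

lemma mat_opnorm_mat_unit_le: "mat_opnorm (mat_unit a b :: 'n::finite \<Rightarrow> 'n \<Rightarrow> complex) \<le> 1"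
  unfolding mat_opnorm_def
proof (rule cSUP_least)
  have "vec_norm (\<lambda>_::'n. 0) \<le> 1" by (simp add: vec_norm_def)
  then show "{w. vec_norm (w::'n \<Rightarrow> complex) \<le> 1} \<noteq> {}" by blast
next
  fix w :: "'n \<Rightarrow> complex" assume "w \<in> {w. vec_norm w \<le> 1}"
  moreover have "(\<Sum>b'\<in>UNIV. mat_unit a b a' b' * w b') = (if a' = a then w b else 0)" for a'
  proof -
    have "(\<Sum>b'\<in>UNIV. mat_unit a b a' b' * w b') = (\<Sum>b'\<in>UNIV. if b' = b then (if a' = a then w b' else 0) else 0)"
      by (rule sum.cong) (auto simp: mat_unit_def)
    then show ?thesis by simp
  qed
  ultimately show "vec_norm (\<lambda>a'. \<Sum>b'\<in>UNIV. mat_unit a b a' b' * w b') \<le> 1"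
    using norm_le_vec_norm[of w b] by (simp add: vec_norm_delta)
qed

section \<open>The kernel of a superoperator\<close>

lemma bdd_above_superop_kernel:
  fixes S :: "('d::finite,'n::finite) kernel \<Rightarrow> ('d,'n) kernel"
  assumes S: "bounded_superop S"
  shows "bdd_above ((\<lambda>M. mat_opnorm (superop_kernel S x0 y0 x y M)) ` {M. mat_opnorm M \<le> 1})"
proof -
  obtain C where C: "\<And>A. trace_class A \<Longrightarrow> trace_norm (S A) \<le> C * trace_norm A"
    using S unfolding bounded_superop_def by blast
  define c where "c = max C 0 * CARD('n) ^ 2"
  have entry: "norm (superop_kernel S x0 y0 x y M a' b') \<le> c" if "mat_opnorm M \<le> 1" for M a' b'
  proof -
    have E: "trace_class (elem_op M x0 y0)" by (rule trace_class_elem_op(1))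
    have "(\<Sum>a\<in>UNIV. \<Sum>b\<in>UNIV. norm (M a b)) \<le> (\<Sum>a\<in>(UNIV::'n set). \<Sum>b\<in>(UNIV::'n set). 1)"
      using norm_le_mat_opnorm[of M] that by (intro sum_mono) (meson order_trans)
    then have "trace_norm (elem_op M x0 y0) \<le> CARD('n) ^ 2"
      using trace_class_elem_op(2)[of M x0 y0] by (simp add: power2_eq_square)
    then have "C * trace_norm (elem_op M x0 y0) \<le> c"
      unfolding c_def using trace_norm_nonneg[OF E] by (intro mult_mono) auto
    moreover have "norm (superop_kernel S x0 y0 x y M a' b') \<le> trace_norm (S (elem_op M x0 y0))"
      unfolding superop_kernel_def
      by (rule norm_le_trace_norm[OF bounded_superop_trace_class[OF S E]])
    ultimately show ?thesis using C[OF E] by simp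
  qed
  have "mat_opnorm (superop_kernel S x0 y0 x y M) \<le> CARD('n) ^ 2 * c" if "mat_opnorm M \<le> 1" for M
  proof -
    have "mat_opnorm (superop_kernel S x0 y0 x y M)
        \<le> (\<Sum>a'\<in>UNIV. \<Sum>b'\<in>UNIV. norm (superop_kernel S x0 y0 x y M a' b'))"
      by (rule mat_opnorm_le_sum_norm)
    also have "\<dots> \<le> (\<Sum>a'\<in>(UNIV::'n set). \<Sum>b'\<in>(UNIV::'n set). c)"
      using entry[OF that] by (intro sum_mono)
    also have "\<dots> = CARD('n) ^ 2 * c" by (simp add: power2_eq_square)
    finally show ?thesis .
  qed
  then show ?thesis by (intro bdd_aboveI2[where M = "CARD('n) ^ 2 * c"]) auto
qed

lemma norm_le_matmap_norm:
  fixes S :: "('d::finite,'n::finite) kernel \<Rightarrow> ('d,'n) kernel"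
  assumes "bounded_superop S"
  shows "norm (S (unit_kernel (x0, a) (y0, b)) (x, a') (y, b')) \<le> matmap_norm (superop_kernel S x0 y0 x y)"
proof -
  have "norm (S (unit_kernel (x0, a) (y0, b)) (x, a') (y, b')) = norm (superop_kernel S x0 y0 x y (mat_unit a b) a' b')"
    by (simp add: superop_kernel_def elem_op_mat_unit)
  also have "\<dots> \<le> mat_opnorm (superop_kernel S x0 y0 x y (mat_unit a b))" by (rule norm_le_mat_opnorm)
  also have "\<dots> \<le> matmap_norm (superop_kernel S x0 y0 x y)" unfolding matmap_norm_def
    by (rule cSUP_upper[OF _ bdd_above_superop_kernel[OF assms]]) (simp add: mat_opnorm_mat_unit_le)
  finally show ?thesis .
qed

lemma has_sum_lift_finite_labels:
  fixes h :: "'x \<times> 'y \<Rightarrow> real"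
  assumes h: "(h has_sum s) UNIV"
  shows "((\<lambda>((x, a), (y, b)). h (x, y)) has_sum (real CARD('a \<times> 'b) * s))
           (UNIV :: (('x \<times> 'a::finite) \<times> ('y \<times> 'b::finite)) set)"
proof -
  define g :: "('x \<times> 'a) \<times> ('y \<times> 'b) \<Rightarrow> real" where "g = (\<lambda>((x, a), (y, b)). h (x, y))"
  define B where "B z = (\<lambda>(x, y). ((x, fst z), (y, snd z))) ` (UNIV :: ('x \<times> 'y) set)" for z :: "'a \<times> 'b"
  have gB: "(g has_sum s) (B z)" for z
  proof -
    have "inj (\<lambda>(x, y). ((x, fst z), (y, snd z)))" by (auto simp: inj_on_def)
    then show ?thesis
      unfolding B_def using h by (subst has_sum_reindex) (auto simp: g_def comp_def case_prod_beta)
  qed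
  have "(g has_sum (\<Sum>z\<in>(UNIV :: ('a \<times> 'b) set). s)) (\<Union>z\<in>UNIV. B z)"
    by (rule sum_has_sum) (use gB in \<open>auto simp: B_def\<close>)
  moreover have "(\<Union>z\<in>UNIV. B z) = UNIV"
  proof -
    have "p \<in> B (snd (fst p), snd (snd p))" for p
      unfolding B_def by (rule image_eqI[of _ _ "(fst (fst p), fst (snd p))"]) auto
    then show ?thesis by blast
  qed
  ultimately show ?thesis by (simp add: g_def)
qed

lemma trace_norm_superop_unit_le:
  fixes S :: "('d::finite,'n::finite) kernel \<Rightarrow> ('d,'n) kernel"
  assumes S: "bounded_superop S"
    and sm: "(\<lambda>(x, y). matmap_norm (superop_kernel S x0 y0 x y)) summable_on UNIV"
  shows "trace_norm (S (unit_kernel (x0, a) (y0, b)))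
         \<le> real CARD('n \<times> 'n) * (\<Sum>\<^sub>\<infinity>(x, y). matmap_norm (superop_kernel S x0 y0 x y))"
proof -
  define h where "h = (\<lambda>(x, y). matmap_norm (superop_kernel S x0 y0 x y))"
  define g :: "('d,'n) site \<times> ('d,'n) site \<Rightarrow> real" where "g = (\<lambda>((x, a'), (y, b')). h (x, y))"
  define K where "K = S (unit_kernel (x0, a) (y0, b))"
  have "(h has_sum infsum h UNIV) UNIV" using sm by (simp add: h_def)
  from has_sum_lift_finite_labels[OF this]
  have g: "(g has_sum (real CARD('n \<times> 'n) * infsum h UNIV)) UNIV" unfolding g_def .
  have le: "(\<lambda>(i, j). norm (K i j)) p \<le> g p" for p
    using norm_le_matmap_norm[OF S] by (auto simp: K_def g_def h_def split: prod.splits)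
  have fs: "(\<lambda>(i, j). norm (K i j)) summable_on UNIV"
    by (rule summable_on_comparison_test[OF has_sum_imp_summable[OF g] le]) (simp add: case_prod_beta)
  have "trace_norm K \<le> (\<Sum>\<^sub>\<infinity>(i, j). norm (K i j))" by (rule trace_class_entrywise(2)[OF fs])
  also have "\<dots> \<le> infsum g UNIV" by (rule infsum_mono[OF fs has_sum_imp_summable[OF g] le])
  also have "\<dots> = real CARD('n \<times> 'n) * infsum h UNIV" using g by (rule infsumI)
  finally show ?thesis by (simp add: K_def h_def)
qed

section \<open>Operators on which the family vanishes strongly\<close>

definition vanishes_strongly ::
    "(real \<Rightarrow> ('a \<Rightarrow> 'a \<Rightarrow> complex) \<Rightarrow> ('a \<Rightarrow> 'a \<Rightarrow> complex)) \<Rightarrow> ('a \<Rightarrow> 'a \<Rightarrow> complex) \<Rightarrow> bool" where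
  "vanishes_strongly T A \<longleftrightarrow> trace_class A \<and> ((\<lambda>l. trace_norm (T l A)) \<longlongrightarrow> 0) (at_right 0)"

lemma vanishes_strongly_by_bound:
  assumes T: "\<forall>l>0. bounded_superop (T l)" and A: "trace_class A"
    and le: "\<forall>\<^sub>F l in at_right 0. trace_norm (T l A) \<le> g l" and g: "(g \<longlongrightarrow> 0) (at_right 0)"
  shows "vanishes_strongly T A"
proof -
  have "\<forall>\<^sub>F l in at_right 0. norm (trace_norm (T l A)) \<le> g l"
    using le eventually_at_right_less[of "0::real"]
  proof eventually_elim
    case (elim l)
    then have "0 \<le> trace_norm (T l A)"
      using T A by (simp add: trace_norm_nonneg bounded_superop_trace_class)
    with elim show ?case by simp
  qed
  then have "((\<lambda>l. trace_norm (T l A)) \<longlongrightarrow> 0) (at_right 0)" using g by (rule Lim_null_comparison)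
  with A show ?thesis unfolding vanishes_strongly_def by simp
qed

lemma vanishes_strongly_zero:
  assumes T: "\<forall>l>0. bounded_superop (T l)" shows "vanishes_strongly T (\<lambda>i j. 0)"
  using eventually_at_right_less[of "0::real"]
  by (intro vanishes_strongly_by_bound[OF T trace_class_zero, of "\<lambda>_. 0"])
     (auto elim!: eventually_mono simp: bounded_superop_zero T trace_norm_zero)

lemma vanishes_strongly_add:
  assumes T: "\<forall>l>0. bounded_superop (T l)"
    and A: "vanishes_strongly T A" and B: "vanishes_strongly T B"
  shows "vanishes_strongly T (\<lambda>i j. A i j + B i j)"
proof -
  have tA: "trace_class A" and tB: "trace_class B"
    using A B unfolding vanishes_strongly_def by auto
  have "\<forall>\<^sub>F l in at_right 0. trace_norm (T l (\<lambda>i j. A i j + B i j)) \<le> trace_norm (T l A) + trace_norm (T l B)"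
    using eventually_at_right_less[of "0::real"]
  proof eventually_elim
    case (elim l)
    with T have "bounded_superop (T l)" by simp
    then show ?case using tA tB
      by (simp add: bounded_superop_add bounded_superop_trace_class trace_class_add(2))
  qed
  moreover have "((\<lambda>l. trace_norm (T l A) + trace_norm (T l B)) \<longlongrightarrow> 0) (at_right 0)"
    using A B tendsto_add[of "\<lambda>l. trace_norm (T l A)" 0 _ "\<lambda>l. trace_norm (T l B)" 0]
    unfolding vanishes_strongly_def by simp
  ultimately show ?thesis by (rule vanishes_strongly_by_bound[OF T trace_class_add(1)[OF tA tB]])
qed

lemma vanishes_strongly_scale:
  assumes T: "\<forall>l>0. bounded_superop (T l)" and A: "vanishes_strongly T A"
  shows "vanishes_strongly T (\<lambda>i j. c * A i j)"
proof -
  have tA: "trace_class A" using A unfolding vanishes_strongly_def by auto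
  have "\<forall>\<^sub>F l in at_right 0. trace_norm (T l (\<lambda>i j. c * A i j)) \<le> norm c * trace_norm (T l A)"
    using eventually_at_right_less[of "0::real"]
  proof eventually_elim
    case (elim l)
    with T have "bounded_superop (T l)" by simp
    then show ?case using tA
      by (simp add: bounded_superop_scale bounded_superop_trace_class trace_class_scale(2))
  qed
  moreover have "((\<lambda>l. norm c * trace_norm (T l A)) \<longlongrightarrow> 0) (at_right 0)"
    using A unfolding vanishes_strongly_def by (auto intro: tendsto_mult_right_zero)
  ultimately show ?thesis by (rule vanishes_strongly_by_bound[OF T trace_class_scale(1)[OF tA]])
qed

lemma vanishes_strongly_sum:
  assumes T: "\<forall>l>0. bounded_superop (T l)"
    and "finite S" "\<And>s. s \<in> S \<Longrightarrow> vanishes_strongly T (A s)"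
  shows "vanishes_strongly T (\<lambda>i j. \<Sum>s\<in>S. A s i j)"
  using assms(2,3)
proof (induction S rule: finite_induct)
  case empty
  then show ?case using vanishes_strongly_zero[OF T] by simp
next
  case (insert s S)
  then show ?case using vanishes_strongly_add[OF T, of "A s" "\<lambda>i j. \<Sum>s\<in>S. A s i j"] by simp
qed

lemma vanishes_strongly_approx:
  assumes T: "\<forall>l>0. bounded_superop (T l)" and C: "\<forall>l>0. superop_norm (T l) \<le> C"
    and A: "trace_class A"
    and approx: "\<And>e. e > 0 \<Longrightarrow> \<exists>B. vanishes_strongly T B \<and> trace_norm (\<lambda>i j. A i j - B i j) \<le> e"
  shows "vanishes_strongly T A"
  unfolding vanishes_strongly_def
proof (intro conjI A tendstoI)
  fix e :: real assume e: "e > 0"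
  define C' where "C' = max C 1"
  have C': "C' > 0" unfolding C'_def by simp
  obtain B where B: "vanishes_strongly T B" and AB: "trace_norm (\<lambda>i j. A i j - B i j) \<le> e / (2 * C')"
    using approx[of "e / (2 * C')"] e C' by auto
  have tB: "trace_class B" and tD: "trace_class (\<lambda>i j. A i j - B i j)"
    using B A trace_class_diff unfolding vanishes_strongly_def by auto
  have "\<forall>\<^sub>F l in at_right 0. trace_norm (T l B) < e / 2"
    using B e unfolding vanishes_strongly_def by (auto dest: order_tendstoD(2)[of _ 0 _ "e / 2"])
  then show "\<forall>\<^sub>F l in at_right 0. dist (trace_norm (T l A)) 0 < e"
    using eventually_at_right_less[of "0::real"]
  proof eventually_elim
    case (elim l)
    with T have Tl: "bounded_superop (T l)" by simp
    have "T l A = T l (\<lambda>i j. B i j + (A i j - B i j))" by simp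
    also have "\<dots> = (\<lambda>i j. T l B i j + T l (\<lambda>i j. A i j - B i j) i j)"
      by (rule bounded_superop_add[OF Tl tB tD])
    finally have "trace_norm (T l A) \<le> trace_norm (T l B) + trace_norm (T l (\<lambda>i j. A i j - B i j))"
      using trace_class_add(2)[OF bounded_superop_trace_class[OF Tl tB] bounded_superop_trace_class[OF Tl tD]]
      by simp
    also have "trace_norm (T l (\<lambda>i j. A i j - B i j)) \<le> C' * trace_norm (\<lambda>i j. A i j - B i j)"
    proof -
      have "superop_norm (T l) \<le> C'" using C elim unfolding C'_def by auto
      then show ?thesis using trace_norm_superop_le[OF Tl tD] trace_norm_nonneg[OF tD]
        by (meson mult_right_mono order_trans)
    qed
    also have "\<dots> \<le> e / 2" using AB C' by (simp add: field_simps)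
    finally show ?case
      using elim trace_norm_nonneg[OF bounded_superop_trace_class[OF Tl A]] by (simp add: dist_real_def)
  qed
qed

lemma unit_kernel_vanishes_strongly:
  fixes T :: "real \<Rightarrow> ('d::finite, 'n::finite) kernel \<Rightarrow> ('d,'n) kernel"
  assumes T: "\<forall>l>0. bounded_superop (T l)" and pt: "pt_lim_zero T"
  shows "vanishes_strongly T (unit_kernel p q)"
proof -
  obtain x0 a y0 b where pq: "p = (x0, a)" "q = (y0, b)" by (metis surj_pair)
  let ?h = "\<lambda>l. \<Sum>\<^sub>\<infinity>(x, y). matmap_norm (superop_kernel (T l) x0 y0 x y)"
  have ev: "\<forall>\<^sub>F l in at_right 0. (\<lambda>(x, y). matmap_norm (superop_kernel (T l) x0 y0 x y)) summable_on UNIV"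
    and lim: "(?h \<longlongrightarrow> 0) (at_right 0)"
    using pt unfolding pt_lim_zero_def by auto
  have "trace_class (unit_kernel p q)"
    unfolding pq elem_op_mat_unit[symmetric] by (rule trace_class_elem_op(1))
  moreover have "\<forall>\<^sub>F l in at_right 0. trace_norm (T l (unit_kernel p q)) \<le> real CARD('n \<times> 'n) * ?h l"
    using ev eventually_at_right_less[of "0::real"]
  proof eventually_elim
    case (elim l)
    then show ?case using T unfolding pq by (intro trace_norm_superop_unit_le) auto
  qed
  ultimately show ?thesis
    using tendsto_mult_right_zero[OF lim] by (rule vanishes_strongly_by_bound[OF T])
qed

lemma rank_one_zero_outside_finite:
  assumes "finite F"
  shows "rank_one (zero_outside F u) (zero_outside F v) =
    (\<lambda>i j. \<Sum>z\<in>F \<times> F. u (fst z) * cnj (v (snd z)) * unit_kernel (fst z) (snd z) i j)"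
proof (intro ext)
  fix i j
  have "(\<Sum>z\<in>F \<times> F. u (fst z) * cnj (v (snd z)) * unit_kernel (fst z) (snd z) i j) =
      (\<Sum>z\<in>F \<times> F. if z = (i, j) then u i * cnj (v j) else 0)"
    unfolding unit_kernel_def by (rule sum.cong) auto
  also have "\<dots> = rank_one (zero_outside F u) (zero_outside F v) i j"
    using assms by (auto simp: rank_one_def zero_outside_def)
  finally show "rank_one (zero_outside F u) (zero_outside F v) i j =
      (\<Sum>z\<in>F \<times> F. u (fst z) * cnj (v (snd z)) * unit_kernel (fst z) (snd z) i j)" ..
qed

lemma trace_norm_rank_one_truncation_le:
  assumes u: "is_l2 u" and v: "is_l2 v"
    and tails: "l2norm (zero_outside (- F) u) \<le> \<delta>" "l2norm (zero_outside (- F) v) \<le> \<delta>"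
  shows "trace_norm (\<lambda>i j. rank_one u v i j - rank_one (zero_outside F u) (zero_outside F v) i j)
    \<le> \<delta> * (l2norm u + l2norm v)"
proof -
  have diff: "(\<lambda>i j. rank_one u v i j - rank_one (zero_outside F u) (zero_outside F v) i j) =
      (\<lambda>i j. rank_one u (zero_outside (- F) v) i j + rank_one (zero_outside (- F) u) (zero_outside F v) i j)"
    by (auto simp: fun_eq_iff rank_one_def zero_outside_def algebra_simps)
  have l2: "is_l2 (zero_outside (- F) v)" "is_l2 (zero_outside (- F) u)" "is_l2 (zero_outside F v)"
    using u v by (auto intro: is_l2_zero_outside)
  have "trace_norm (\<lambda>i j. rank_one u v i j - rank_one (zero_outside F u) (zero_outside F v) i j)
      \<le> trace_norm (rank_one u (zero_outside (- F) v)) + trace_norm (rank_one (zero_outside (- F) u) (zero_outside F v))"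
    unfolding diff by (intro trace_class_add(2) trace_class_rank_one(1) u l2)
  also have "\<dots> \<le> l2norm u * l2norm (zero_outside (- F) v) + l2norm (zero_outside (- F) u) * l2norm (zero_outside F v)"
    by (intro add_mono trace_class_rank_one(2) u l2)
  also have "\<dots> \<le> l2norm u * \<delta> + \<delta> * l2norm v"
    using tails l2norm_zero_outside_le[OF v, of F] order_trans[OF l2norm_nonneg tails(1)]
    by (intro add_mono mult_mono) (auto simp: l2norm_nonneg)
  finally show ?thesis by (simp add: algebra_simps)
qed

lemma rank_one_vanishes_strongly:
  fixes T :: "real \<Rightarrow> ('d::finite, 'n::finite) kernel \<Rightarrow> ('d,'n) kernel"
  assumes T: "\<forall>l>0. bounded_superop (T l)" and C: "\<forall>l>0. superop_norm (T l) \<le> C"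
    and pt: "pt_lim_zero T" and u: "is_l2 u" and v: "is_l2 v"
  shows "vanishes_strongly T (rank_one u v)"
proof (rule vanishes_strongly_approx[OF T C trace_class_rank_one(1)[OF u v]])
  fix e :: real assume e: "e > 0"
  define \<delta> where "\<delta> = e / (l2norm u + l2norm v + 1)"
  have \<delta>: "\<delta> > 0" unfolding \<delta>_def using e l2norm_nonneg[of u] l2norm_nonneg[of v] by simp
  obtain F1 where F1: "finite F1" "\<And>G. F1 \<subseteq> G \<Longrightarrow> l2norm (zero_outside (- G) u) \<le> \<delta>"
    using l2norm_tail_small[OF u \<delta>] by blast
  obtain F2 where F2: "finite F2" "\<And>G. F2 \<subseteq> G \<Longrightarrow> l2norm (zero_outside (- G) v) \<le> \<delta>"
    using l2norm_tail_small[OF v \<delta>] by blast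
  define F where "F = F1 \<union> F2"
  have F: "finite F" using F1(1) F2(1) by (simp add: F_def)
  have "vanishes_strongly T (rank_one (zero_outside F u) (zero_outside F v))"
    unfolding rank_one_zero_outside_finite[OF F] using F
    by (intro vanishes_strongly_sum[OF T] vanishes_strongly_scale[OF T]
        unit_kernel_vanishes_strongly[OF T pt]) simp
  moreover have "trace_norm (\<lambda>i j. rank_one u v i j - rank_one (zero_outside F u) (zero_outside F v) i j)
      \<le> \<delta> * (l2norm u + l2norm v)"
    using F1(2)[of F] F2(2)[of F] by (intro trace_norm_rank_one_truncation_le u v) (auto simp: F_def)
  moreover have "\<delta> * (l2norm u + l2norm v) \<le> e"
    using e l2norm_nonneg[of u] l2norm_nonneg[of v] by (simp add: \<delta>_def field_simps)
  ultimately show "\<exists>B. vanishes_strongly T B \<and> trace_norm (\<lambda>i j. rank_one u v i j - B i j) \<le> e"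
    by (meson order_trans)
qed

lemma trace_class_vanishes_strongly:
  fixes T :: "real \<Rightarrow> ('d::finite, 'n::finite) kernel \<Rightarrow> ('d,'n) kernel"
  assumes T: "\<forall>l>0. bounded_superop (T l)" and C: "\<forall>l>0. superop_norm (T l) \<le> C"
    and pt: "pt_lim_zero T" and A: "trace_class A"
  shows "vanishes_strongly T A"
proof (rule vanishes_strongly_approx[OF T C A])
  fix e :: real assume e: "e > 0"
  obtain u v where rep: "nuclear_rep A u v" using A unfolding trace_class_def by blast
  then have "(\<lambda>n. \<Sum>k<n. l2norm (u k) * l2norm (v k)) \<longlonglongrightarrow> nuclear_sum u v"
    unfolding nuclear_rep_def nuclear_sum_def by (auto intro: summable_LIMSEQ)
  then obtain n where "norm ((\<Sum>k<n. l2norm (u k) * l2norm (v k)) - nuclear_sum u v) < e"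
    using LIMSEQ_D[OF _ e] by blast
  then have n: "nuclear_sum u v - (\<Sum>k<n. l2norm (u k) * l2norm (v k)) \<le> e" by simp
  have "vanishes_strongly T (\<lambda>i j. \<Sum>k<n. rank_one (u k) (v k) i j)"
    using rep unfolding nuclear_rep_def
    by (intro vanishes_strongly_sum[OF T] rank_one_vanishes_strongly[OF T C pt]) auto
  with trace_norm_nuclear_remainder_le[OF rep, of n] n
  show "\<exists>B. vanishes_strongly T B \<and> trace_norm (\<lambda>i j. A i j - B i j) \<le> e"
    by fastforce
qed

theorem lemma4p1:
  fixes T :: "real \<Rightarrow> ('d::finite, 'n::finite) kernel \<Rightarrow> ('d,'n) kernel"
  assumes bdd: "\<forall>l>0. bounded_superop (T l)"
    and unif: "\<exists>C. \<forall>l>0. superop_norm (T l) \<le> C"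
    and pt: "pt_lim_zero T"
  shows "\<forall>A. trace_class A \<longrightarrow> ((\<lambda>l. trace_norm (T l A)) \<longlongrightarrow> 0) (at_right 0)"
proof (intro allI impI)
  fix A :: "('d,'n) kernel" assume A: "trace_class A"
  obtain C where C: "\<forall>l>0. superop_norm (T l) \<le> C" using unif by blast
  show "((\<lambda>l. trace_norm (T l A)) \<longlongrightarrow> 0) (at_right 0)"
    using trace_class_vanishes_strongly[OF bdd C pt A] unfolding vanishes_strongly_def by simp
qed

end
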